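(* Let $G$ be a topological group with identity $e$ and $\kappa$ a cardinal. If $A$ is a precompact subset of $G$ and $\mathcal{N}_e^G$ has calibre $(\kappa^+,\omega)$, then $w(A)\le\kappa$.
   Context: $\mathcal{N}_e^G$ is the family of open neighborhoods of $e$ ordered by reverse inclusion. A subset $A$ of $G$ is precompact if it is totally bounded with respect to the (left) group uniformity, i.e. for every neighborhood $U$ of $e$ there is finite $F\subseteq A$ with $A\subseteq FU$. A directed set $P$ has calibre $(\mu,\lambda)$ if every subset of $P$ of size $\mu$ contains a subset of size $\lambda$ with an upper bound in $P$. $w(A)$ is the weight (least size of a base) of $A$. *)

theory Defs
  imports "HOL-Analysis.Analysis"
begin

text \<open>Topological groups are modelled by the library class topological_group_add
  (a group written additively, not necessarily commutative, whose addition is jointly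
  continuous and whose inversion is continuous); the identity e is 0.\<close>

definition nbhds_e :: "'a::topological_group_add set set" where
  "nbhds_e = {U. open U \<and> 0 \<in> U}"

text \<open>Precompact (totally bounded w.r.t. the left uniformity): for every neighbourhood U
  of e there is a finite F \<subseteq> A with A \<subseteq> F U.\<close>
definition precompact :: "'a::topological_group_add set \<Rightarrow> bool" where
  "precompact A \<longleftrightarrow> (\<forall>U. open U \<and> 0 \<in> U \<longrightarrow>
     (\<exists>F. finite F \<and> F \<subseteq> A \<and> A \<subseteq> (\<Union>f\<in>F. (\<lambda>u. f + u) ` U)))"

definition calibre :: "'p set \<Rightarrow> ('p \<Rightarrow> 'p \<Rightarrow> bool) \<Rightarrow> 'm rel \<Rightarrow> 'l rel \<Rightarrow> bool" where
  "calibre P le mu lam \<longleftrightarrow> (\<forall>S. S \<subseteq> P \<and> (card_of S, mu) \<in> ordIso \<longrightarrow>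
     (\<exists>T. T \<subseteq> S \<and> (card_of T, lam) \<in> ordIso \<and> (\<exists>u\<in>P. \<forall>t\<in>T. le t u)))"

definition is_base :: "'a topology \<Rightarrow> 'a set set \<Rightarrow> bool" where
  "is_base X \<B> \<longleftrightarrow> (\<forall>B\<in>\<B>. openin X B) \<and>
     (\<forall>U. openin X U \<longrightarrow> (\<exists>\<C>. \<C> \<subseteq> \<B> \<and> \<Union>\<C> = U))"

definition weight_le :: "'a topology \<Rightarrow> 'k rel \<Rightarrow> bool" where
  "weight_le X kappa \<longleftrightarrow> (\<exists>\<B>. is_base X \<B> \<and> (card_of \<B>, kappa) \<in> ordLeq)"

end

theory Submission
  imports Defs
begin

unbundle cardinal_syntax

text \<open>
  Measure closeness in A by the entourages of the left uniformity,
  {(x, y) \<in> A \<times> A. -x + y \<in> W} for neighbourhoods W of 0. If some family \<V> of at most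
  kappa neighbourhoods generates this uniformity on A, i.e. every entourage contains the one of a
  finite intersection of members of \<V>, then the traces on A of the translates f + \<Inter>\<G>, with f
  ranging over a finite net of A for \<Inter>\<G>, form a base of A of size at most kappa.

  Otherwise a transfinite recursion of length kappa^+ produces pairwise distinct
  neighbourhoods U_i and W_i \<supseteq> U_i + U_i + U_i such that for each i
  and each finite intersection of earlier U_j some pair (x, y) in A has -x + y in that
  intersection but not in W_i. By calibre (kappa^+, omega), infinitely many U_i
  contain a common neighbourhood u. Take a finite net F of A for a neighbourhood V with
  -V + V \<subseteq> u, and |F \<times> F| + 1 of these indices, each with a witness pair against the earlier
  ones among them. Two witness pairs (x_s, y_s), (x_t, y_t) lie in the same cells
  of F; if s precedes t, this puts -x_s + y_s into
  U_s + U_s + U_s \<subseteq> W_s, a contradiction.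
\<close>

subsection \<open>Cardinal arithmetic\<close>

lemma finite_ordLeq_infinite_Card_order:
  assumes "Card_order r" and "infinite (Field r)" and "finite X"
  shows "|X| \<le>o r"
proof -
  have "Well_order r"
    using assms(1) card_order_on_well_order_on by blast
  then have "|X| <o r"
    using finite_ordLess_infinite[OF card_of_Well_order] assms Field_card_of by metis
  then show ?thesis
    by (rule ordLess_imp_ordLeq)
qed

lemma Fpow_card_le_Suc_subset:
  "{G \<in> Fpow X. card G \<le> Suc n} \<subseteq>
    {G \<in> Fpow X. card G \<le> n} \<union> (\<lambda>(x, G). insert x G) ` (X \<times> {G \<in> Fpow X. card G \<le> n})"
proof
  fix G assume G: "G \<in> {G \<in> Fpow X. card G \<le> Suc n}"
  show "G \<in> {G \<in> Fpow X. card G \<le> n} \<union> (\<lambda>(x, G). insert x G) ` (X \<times> {G \<in> Fpow X. card G \<le> n})"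
  proof (cases "G = {}")
    case True
    then show ?thesis by (auto simp: Fpow_def)
  next
    case False
    then obtain x where "x \<in> G" by auto
    then have "(x, G - {x}) \<in> X \<times> {G \<in> Fpow X. card G \<le> n}" and "G = insert x (G - {x})"
      using G by (auto simp: Fpow_def)
    then show ?thesis
      by (intro UnI2 rev_image_eqI) auto
  qed
qed

lemma card_of_Fpow_ordLeq_infinite_Card_order:
  assumes r: "Card_order r" and inf: "infinite (Field r)" and X: "|X| \<le>o r"
  shows "|Fpow X| \<le>o r"
proof -
  define P where "P n = {G \<in> Fpow X. card G \<le> n}" for n
  have Pn: "|P n| \<le>o r" for n
  proof (induction n)
    case 0
    have "P 0 = {{}}"
      by (auto simp: P_def Fpow_def)
    then show ?case
      using finite_ordLeq_infinite_Card_order[OF r inf, of "P 0"] by simp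
  next
    case (Suc n)
    have "|(\<lambda>(x, G). insert x G) ` (X \<times> P n)| \<le>o r"
      using ordLeq_transitive[OF card_of_image card_of_Times_ordLeq_infinite_Field[OF inf X Suc r]] .
    then have "|P n \<union> (\<lambda>(x, G). insert x G) ` (X \<times> P n)| \<le>o r"
      using card_of_Un_ordLeq_infinite_Field[OF inf Suc _ r] by blast
    then show ?case
      using ordLeq_transitive[OF card_of_mono1[OF Fpow_card_le_Suc_subset]] unfolding P_def by blast
  qed
  have "|UNIV :: nat set| \<le>o |Field r|"
    using inf infinite_iff_card_of_nat by blast
  then have "|UNIV :: nat set| \<le>o r"
    using card_of_Field_ordIso[OF r] ordLeq_ordIso_trans by blast
  then have "|\<Union>n. P n| \<le>o r"
    using card_of_UNION_ordLeq_infinite_Field[OF inf r] Pn by blast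
  moreover have "Fpow X = (\<Union>n. P n)"
    by (auto simp: P_def Fpow_def)
  ultimately show ?thesis
    by simp
qed

lemma card_of_UN_finite_ordLeq_infinite_Card_order:
  assumes r: "Card_order r" and inf: "infinite (Field r)" and "|I| \<le>o r"
    and "\<And>i. i \<in> I \<Longrightarrow> finite (B i)"
  shows "|\<Union>i\<in>I. B i| \<le>o r"
proof (rule card_of_UNION_ordLeq_infinite_Field[OF inf r \<open>|I| \<le>o r\<close>])
  show "\<forall>i\<in>I. |B i| \<le>o r"
    using finite_ordLeq_infinite_Card_order[OF r inf assms(4)] by blast
qed

lemma card_of_underS_cardSuc_ordLeq:
  assumes "Card_order r" and "i \<in> Field (cardSuc r)"
  shows "|underS (cardSuc r) i| \<le>o r"
  using card_of_underS[OF cardSuc_Card_order[OF assms(1)] assms(2)]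
    cardSuc_ordLeq_ordLess[OF assms(1) card_of_Card_order] by blast

lemma card_of_inj_image_Field_ordIso:
  assumes "Card_order r" and "inj_on f (Field r)"
  shows "( |f ` Field r|, r) \<in> ordIso"
proof -
  have "( |Field r|, |f ` Field r| ) \<in> ordIso"
    using assms(2) card_of_ordIso inj_on_imp_bij_betw by blast
  then show ?thesis
    using card_of_Field_ordIso[OF assms(1)] ordIso_symmetric ordIso_transitive by blast
qed

lemma infinite_if_ordIso_natLeq:
  assumes "( |T|, natLeq) \<in> ordIso"
  shows "infinite T"
  using card_of_ordIso_finite_Field[OF natLeq_Card_order ordIso_symmetric[OF assms]]
  by (simp add: Field_natLeq)

lemma well_order_recursive_choice:
  assumes "Well_order R" and step: "\<And>i f. i \<in> Field R \<Longrightarrow> \<exists>y. P (f ` underS R i) y"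
  shows "\<exists>h. \<forall>i\<in>Field R. P (h ` underS R i) (h i)"
proof -
  have wf: "wf (R - Id)"
    using assms(1) unfolding well_order_on_def by blast
  define h where "h = wfrec (R - Id) (\<lambda>h i. SOME y. P (h ` underS R i) y)"
  have h: "h i = (SOME y. P (h ` underS R i) y)" for i
  proof -
    have "h i = (SOME y. P (cut h (R - Id) i ` underS R i) y)"
      unfolding h_def by (subst wfrec[OF wf]) simp
    also have "cut h (R - Id) i ` underS R i = h ` underS R i"
      by (auto simp: cut_def underS_def)
    finally show ?thesis .
  qed
  show ?thesis
  proof (intro exI ballI)
    fix i assume "i \<in> Field R"
    show "P (h ` underS R i) (h i)"
      unfolding h[of i] by (rule someI_ex[OF step[OF \<open>i \<in> Field R\<close>]])
  qed
qed

subsection \<open>Neighbourhoods of the identity and finite nets\<close>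

lemma Inter_in_nbhds_e:
  assumes "finite \<G>" and "\<G> \<subseteq> nbhds_e"
  shows "\<Inter>\<G> \<in> nbhds_e"
  using assms by (auto simp: nbhds_e_def)

lemma vimage_add_left_in_nbhds_e:
  fixes a :: "'a::topological_group_add"
  assumes "open T" and "a \<in> T"
  shows "(\<lambda>x. a + x) -` T \<in> nbhds_e"
  using assms by (auto simp: nbhds_e_def intro!: open_vimage continuous_intros)

lemma openin_Int_vimage_add_left:
  fixes f :: "'a::topological_group_add"
  assumes "open V"
  shows "openin (subtopology euclidean A) (A \<inter> (\<lambda>y. f + y) -` V)"
proof (rule openin_open_Int)
  show "open ((\<lambda>y. f + y) -` V)"
    using assms by (rule open_vimage) (intro continuous_intros)
qed

lemma nbhds_e_add_subset:
  assumes "W \<in> nbhds_e"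
  shows "\<exists>U\<in>nbhds_e. U + U \<subseteq> W"
proof -
  have "open ((\<lambda>p. fst p + snd p) -` W)"
    using assms by (auto simp: nbhds_e_def intro!: open_vimage continuous_intros)
  moreover have "(0, 0) \<in> (\<lambda>p. fst p + snd p) -` W"
    using assms by (simp add: nbhds_e_def)
  ultimately obtain S T where "open S" "open T" "(0, 0) \<in> S \<times> T"
    and ST: "S \<times> T \<subseteq> (\<lambda>p. fst p + snd p) -` W"
    by (rule open_prod_elim)
  then have "S \<inter> T \<in> nbhds_e"
    by (auto simp: nbhds_e_def)
  moreover have "(S \<inter> T) + (S \<inter> T) \<subseteq> W"
    using ST by (auto simp: set_plus_def)
  ultimately show ?thesis
    by blast
qed

lemma nbhds_e_add3_subset:
  assumes "W \<in> nbhds_e"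
  shows "\<exists>U\<in>nbhds_e. U + U + U \<subseteq> W"
proof -
  obtain U1 where "U1 \<in> nbhds_e" and U1: "U1 + U1 \<subseteq> W"
    using nbhds_e_add_subset[OF assms] by blast
  obtain U where U: "U \<in> nbhds_e" and UU: "U + U \<subseteq> U1"
    using nbhds_e_add_subset[OF \<open>U1 \<in> nbhds_e\<close>] by blast
  have "U \<subseteq> U + U"
  proof
    fix u assume "u \<in> U"
    then have "u + 0 \<in> U + U"
      using U by (intro set_plus_intro) (auto simp: nbhds_e_def)
    then show "u \<in> U + U"
      by simp
  qed
  with UU have "U + U + U \<subseteq> U1 + U1"
    by (intro set_plus_mono2) auto
  with U U1 show ?thesis
    by blast
qed

lemma nbhds_e_left_diff_subset:
  assumes "W \<in> nbhds_e"
  shows "\<exists>U\<in>nbhds_e. \<forall>u\<in>U. \<forall>v\<in>U. -u + v \<in> W"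
proof -
  obtain U1 where "U1 \<in> nbhds_e" and U1: "U1 + U1 \<subseteq> W"
    using nbhds_e_add_subset[OF assms] by blast
  have "U1 \<inter> uminus -` U1 \<in> nbhds_e"
    using \<open>U1 \<in> nbhds_e\<close> by (auto simp: nbhds_e_def intro!: open_vimage continuous_intros)
  moreover have "-u + v \<in> W" if "u \<in> U1 \<inter> uminus -` U1" and "v \<in> U1 \<inter> uminus -` U1" for u v
    using that U1 set_plus_intro[of "-u" U1 v U1] by auto
  ultimately show ?thesis
    by blast
qed

lemma precompact_left_net:
  assumes "precompact A" and "V \<in> nbhds_e"
  shows "\<exists>F. finite F \<and> F \<subseteq> A \<and> (\<forall>a\<in>A. \<exists>f\<in>F. -f + a \<in> V)"
proof -
  have "open V" and "0 \<in> V"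
    using assms(2) by (simp_all add: nbhds_e_def)
  then obtain F where "finite F" "F \<subseteq> A" and cover: "A \<subseteq> (\<Union>f\<in>F. (\<lambda>u. f + u) ` V)"
    using assms(1) unfolding precompact_def by meson
  have "\<exists>f\<in>F. -f + a \<in> V" if "a \<in> A" for a
  proof -
    obtain f v where "f \<in> F" "v \<in> V" "a = f + v"
      using cover \<open>a \<in> A\<close> by blast
    then have "-f + a \<in> V"
      by simp
    with \<open>f \<in> F\<close> show ?thesis ..
  qed
  with \<open>finite F\<close> \<open>F \<subseteq> A\<close> show ?thesis
    by blast
qed

lemma left_diff_in_add3_if_same_cells:
  fixes a b c d f g :: "'a::group_add"
  assumes V: "\<forall>v\<in>V. \<forall>w\<in>V. -v + w \<in> U"
    and "-f + a \<in> V" and "-f + c \<in> V" and "-g + b \<in> V" and "-g + d \<in> V"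
    and "-c + d \<in> U"
  shows "-a + b \<in> U + U + U"
proof -
  have "-a + b = (-(-f + a) + (-f + c)) + (-c + d) + (-(-g + d) + (-g + b))"
    by (simp add: minus_add add.assoc)
  also have "\<dots> \<in> U + U + U"
    using assms by (intro set_plus_intro) auto
  finally show ?thesis .
qed

lemma two_pairs_in_same_cells:
  fixes x y :: "'i \<Rightarrow> 'a::group_add"
  assumes "finite F" and F: "\<forall>a\<in>A. \<exists>f\<in>F. -f + a \<in> V"
    and "finite T" and "card (F \<times> F) < card T" and xy: "\<forall>t\<in>T. x t \<in> A \<and> y t \<in> A"
  obtains s t f g where "s \<in> T" and "t \<in> T" and "s \<noteq> t"
    and "-f + x s \<in> V" and "-f + x t \<in> V" and "-g + y s \<in> V" and "-g + y t \<in> V"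
proof -
  have "\<forall>t\<in>T. \<exists>c. c \<in> F \<times> F \<and> -fst c + x t \<in> V \<and> -snd c + y t \<in> V"
  proof
    fix t assume "t \<in> T"
    with xy have "x t \<in> A" and "y t \<in> A"
      by simp_all
    with F obtain f g where "f \<in> F" "-f + x t \<in> V" "g \<in> F" "-g + y t \<in> V"
      by meson
    then show "\<exists>c. c \<in> F \<times> F \<and> -fst c + x t \<in> V \<and> -snd c + y t \<in> V"
      by (intro exI[of _ "(f, g)"]) simp
  qed
  then obtain c where c: "\<forall>t\<in>T. c t \<in> F \<times> F \<and> -fst (c t) + x t \<in> V \<and> -snd (c t) + y t \<in> V"
    by (rule bchoice[THEN exE])
  have "card (c ` T) \<le> card (F \<times> F)"
    using c \<open>finite F\<close> by (intro card_mono) auto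
  with \<open>card (F \<times> F) < card T\<close> have "\<not> inj_on c T"
    by (intro pigeonhole) simp
  then obtain s t where "s \<in> T" "t \<in> T" "s \<noteq> t" "c s = c t"
    unfolding inj_on_def by blast
  moreover have "-fst (c t) + x s \<in> V \<and> -fst (c t) + x t \<in> V \<and>
      -snd (c t) + y s \<in> V \<and> -snd (c t) + y t \<in> V"
    using c[rule_format, OF \<open>s \<in> T\<close>] c[rule_format, OF \<open>t \<in> T\<close>] \<open>c s = c t\<close> by simp
  ultimately show thesis
    using that by blast
qed

subsection \<open>Generating the uniformity of a subset\<close>

definition left_entourage :: "'a::group_add set \<Rightarrow> 'a set \<Rightarrow> ('a \<times> 'a) set" where
  "left_entourage A V = {(x, y). x \<in> A \<and> y \<in> A \<and> -x + y \<in> V}"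

lemma mem_left_entourage [simp]:
  "(x, y) \<in> left_entourage A V \<longleftrightarrow> x \<in> A \<and> y \<in> A \<and> -x + y \<in> V"
  by (simp add: left_entourage_def)

definition generates_uniformity_on :: "'a::topological_group_add set \<Rightarrow> 'a set set \<Rightarrow> bool" where
  "generates_uniformity_on A \<V> \<longleftrightarrow>
     (\<forall>W\<in>nbhds_e. \<exists>\<G>\<in>Fpow \<V>. left_entourage A (\<Inter>\<G>) \<subseteq> left_entourage A W)"

lemma generates_uniformity_on_local_base:
  fixes A :: "'a::topological_group_add set"
  assumes gen: "generates_uniformity_on A \<V>"
    and net: "\<forall>\<G>\<in>Fpow \<V>. net \<G> \<subseteq> A \<and> (\<forall>a\<in>A. \<exists>f\<in>net \<G>. -f + a \<in> \<Inter>\<G>)"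
    and "open T" and "a \<in> A" and "a \<in> T"
  obtains \<G> f where "\<G> \<in> Fpow \<V>" and "f \<in> net \<G>"
    and "a \<in> A \<inter> (\<lambda>y. -f + y) -` \<Inter>\<G>" and "A \<inter> (\<lambda>y. -f + y) -` \<Inter>\<G> \<subseteq> T"
proof -
  obtain W where "W \<in> nbhds_e" and W: "\<forall>u\<in>W. \<forall>v\<in>W. a + (-u + v) \<in> T"
    using nbhds_e_left_diff_subset[OF vimage_add_left_in_nbhds_e[OF \<open>open T\<close> \<open>a \<in> T\<close>]]
    by auto
  obtain \<G> where "\<G> \<in> Fpow \<V>" and GW: "left_entourage A (\<Inter>\<G>) \<subseteq> left_entourage A W"
    using gen \<open>W \<in> nbhds_e\<close> unfolding generates_uniformity_on_def by blast
  obtain f where "f \<in> net \<G>" and "-f + a \<in> \<Inter>\<G>"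
    using net \<open>\<G> \<in> Fpow \<V>\<close> \<open>a \<in> A\<close> by blast
  have "f \<in> A"
    using net \<open>\<G> \<in> Fpow \<V>\<close> \<open>f \<in> net \<G>\<close> by blast
  have "A \<inter> (\<lambda>y. -f + y) -` \<Inter>\<G> \<subseteq> T"
  proof
    fix y assume "y \<in> A \<inter> (\<lambda>y. -f + y) -` \<Inter>\<G>"
    with \<open>f \<in> A\<close> \<open>a \<in> A\<close> \<open>-f + a \<in> \<Inter>\<G>\<close>
    have "(f, a) \<in> left_entourage A (\<Inter>\<G>)" and "(f, y) \<in> left_entourage A (\<Inter>\<G>)"
      by simp_all
    then have "(f, a) \<in> left_entourage A W" and "(f, y) \<in> left_entourage A W"
      by (meson GW subsetD)+
    then have "a + (-(-f + a) + (-f + y)) \<in> T"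
      using W by simp
    then show "y \<in> T"
      by (simp add: minus_add add.assoc)
  qed
  moreover have "a \<in> A \<inter> (\<lambda>y. -f + y) -` \<Inter>\<G>"
    using \<open>a \<in> A\<close> \<open>-f + a \<in> \<Inter>\<G>\<close> by simp
  ultimately show thesis
    using that \<open>\<G> \<in> Fpow \<V>\<close> \<open>f \<in> net \<G>\<close> by blast
qed

lemma is_baseI:
  assumes "\<And>B. B \<in> \<B> \<Longrightarrow> openin X B"
    and "\<And>U a. openin X U \<Longrightarrow> a \<in> U \<Longrightarrow> \<exists>B\<in>\<B>. a \<in> B \<and> B \<subseteq> U"
  shows "is_base X \<B>"
proof -
  have "\<exists>\<C>\<subseteq>\<B>. \<Union>\<C> = U" if "openin X U" for U
  proof (intro exI conjI)
    show "\<Union>{B \<in> \<B>. B \<subseteq> U} = U"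
      using assms(2)[OF that] by blast
  qed auto
  then show ?thesis
    unfolding is_base_def using assms(1) by blast
qed

lemma weight_le_if_generates_uniformity_on:
  fixes A :: "'a::topological_group_add set" and kappa :: "'k rel"
  assumes r: "Card_order kappa" and inf: "infinite (Field kappa)" and "precompact A"
    and nbhds: "\<V> \<subseteq> nbhds_e" and card: "|\<V>| \<le>o kappa" and gen: "generates_uniformity_on A \<V>"
  shows "weight_le (subtopology euclidean A) kappa"
proof -
  have Inter_nbhd: "\<Inter>\<G> \<in> nbhds_e" if "\<G> \<in> Fpow \<V>" for \<G>
    using that nbhds Inter_in_nbhds_e by (auto simp: Fpow_def)
  have "\<forall>\<G>\<in>Fpow \<V>. \<exists>F. finite F \<and> F \<subseteq> A \<and> (\<forall>a\<in>A. \<exists>f\<in>F. -f + a \<in> \<Inter>\<G>)"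
    using precompact_left_net[OF \<open>precompact A\<close> Inter_nbhd] by blast
  then obtain net where net: "\<forall>\<G>\<in>Fpow \<V>.
      finite (net \<G>) \<and> net \<G> \<subseteq> A \<and> (\<forall>a\<in>A. \<exists>f\<in>net \<G>. -f + a \<in> \<Inter>\<G>)"
    by (rule bchoice[THEN exE])
  define \<B> where "\<B> = (\<Union>\<G>\<in>Fpow \<V>. (\<lambda>f. A \<inter> (\<lambda>y. -f + y) -` \<Inter>\<G>) ` net \<G>)"
  have "|\<B>| \<le>o kappa"
    unfolding \<B>_def using net
    by (intro card_of_UN_finite_ordLeq_infinite_Card_order[OF r inf]
        card_of_Fpow_ordLeq_infinite_Card_order[OF r inf card]) simp
  moreover have "is_base (subtopology euclidean A) \<B>"
  proof (rule is_baseI)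
    fix B assume "B \<in> \<B>"
    then obtain \<G> f where "\<G> \<in> Fpow \<V>" and B: "B = A \<inter> (\<lambda>y. -f + y) -` \<Inter>\<G>"
      unfolding \<B>_def by blast
    then have "open (\<Inter>\<G>)"
      using Inter_nbhd by (simp add: nbhds_e_def)
    then show "openin (subtopology euclidean A) B"
      unfolding B by (rule openin_Int_vimage_add_left)
  next
    fix U a assume "openin (subtopology euclidean A) U" and "a \<in> U"
    then obtain T where "open T" and U: "U = A \<inter> T"
      by (auto simp: openin_open)
    with \<open>a \<in> U\<close> have "a \<in> A" and "a \<in> T"
      by auto
    have "\<forall>\<G>\<in>Fpow \<V>. net \<G> \<subseteq> A \<and> (\<forall>a\<in>A. \<exists>f\<in>net \<G>. -f + a \<in> \<Inter>\<G>)"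
      using net by blast
    then obtain \<G> f where "\<G> \<in> Fpow \<V>" and "f \<in> net \<G>"
      and "a \<in> A \<inter> (\<lambda>y. -f + y) -` \<Inter>\<G>" and "A \<inter> (\<lambda>y. -f + y) -` \<Inter>\<G> \<subseteq> T"
      by (rule generates_uniformity_on_local_base[OF gen _ \<open>open T\<close> \<open>a \<in> A\<close> \<open>a \<in> T\<close>])
    moreover from this U have "A \<inter> (\<lambda>y. -f + y) -` \<Inter>\<G> \<subseteq> U"
      by blast
    moreover have "A \<inter> (\<lambda>y. -f + y) -` \<Inter>\<G> \<in> \<B>"
      unfolding \<B>_def using \<open>\<G> \<in> Fpow \<V>\<close> \<open>f \<in> net \<G>\<close> by auto
    ultimately show "\<exists>B\<in>\<B>. a \<in> B \<and> B \<subseteq> U"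
      by metis
  qed
  ultimately show ?thesis
    unfolding weight_le_def by blast
qed

lemma not_generates_uniformity_on_witness:
  fixes A :: "'a::topological_group_add set"
  assumes "\<not> generates_uniformity_on A \<V>"
  shows "\<exists>U W. U \<in> nbhds_e \<and> U + U + U \<subseteq> W \<and>
    (\<forall>\<G>\<in>Fpow \<V>. \<not> left_entourage A (\<Inter>\<G>) \<subseteq> left_entourage A W)"
proof -
  obtain W where "W \<in> nbhds_e"
    and "\<forall>\<G>\<in>Fpow \<V>. \<not> left_entourage A (\<Inter>\<G>) \<subseteq> left_entourage A W"
    using assms unfolding generates_uniformity_on_def by blast
  moreover obtain U where "U \<in> nbhds_e" and "U + U + U \<subseteq> W"
    using nbhds_e_add3_subset[OF \<open>W \<in> nbhds_e\<close>] by blast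
  ultimately show ?thesis
    by blast
qed

subsection \<open>Non-generating sequences\<close>

definition non_generating_sequence ::
    "'a::topological_group_add set \<Rightarrow> 'i rel \<Rightarrow> ('i \<Rightarrow> 'a set) \<Rightarrow> ('i \<Rightarrow> 'a set) \<Rightarrow> bool" where
  "non_generating_sequence A R U W \<longleftrightarrow> (\<forall>i\<in>Field R. U i \<in> nbhds_e \<and> U i + U i + U i \<subseteq> W i \<and>
     (\<forall>\<G>\<in>Fpow (U ` underS R i). \<not> left_entourage A (\<Inter>\<G>) \<subseteq> left_entourage A (W i)))"

lemma exists_non_generating_sequence:
  fixes A :: "'a::topological_group_add set" and kappa :: "'k rel"
  assumes r: "Card_order kappa"
    and no_gen: "\<And>\<V>. \<V> \<subseteq> nbhds_e \<Longrightarrow> |\<V>| \<le>o kappa \<Longrightarrow> \<not> generates_uniformity_on A \<V>"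
  shows "\<exists>U W. non_generating_sequence A (cardSuc kappa) U W"
proof -
  let ?R = "cardSuc kappa"
  \<comment> \<open>Intersecting with \<^const>\<open>nbhds_e\<close> changes nothing along the recursion below, but makes
    the recursion step applicable to arbitrary earlier values.\<close>
  define P where "P X p \<longleftrightarrow> fst p \<in> nbhds_e \<and> fst p + fst p + fst p \<subseteq> snd p \<and>
    (\<forall>\<G>\<in>Fpow (fst ` X \<inter> nbhds_e). \<not> left_entourage A (\<Inter>\<G>) \<subseteq> left_entourage A (snd p))"
    for X :: "('a set \<times> 'a set) set" and p
  have "\<exists>p. P (h ` underS ?R i) p" if "i \<in> Field ?R" for h i
  proof -
    let ?\<V> = "fst ` h ` underS ?R i \<inter> nbhds_e"
    have "|?\<V>| \<le>o |h ` underS ?R i|"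
      using card_of_mono1[OF Int_lower1] card_of_image ordLeq_transitive by blast
    also have "|h ` underS ?R i| \<le>o kappa"
      using card_of_image card_of_underS_cardSuc_ordLeq[OF r that] by (rule ordLeq_transitive)
    finally have "\<not> generates_uniformity_on A ?\<V>"
      using no_gen by blast
    then obtain U W where "U \<in> nbhds_e" and "U + U + U \<subseteq> W"
      and "\<forall>\<G>\<in>Fpow ?\<V>. \<not> left_entourage A (\<Inter>\<G>) \<subseteq> left_entourage A W"
      using not_generates_uniformity_on_witness by meson
    then have "P (h ` underS ?R i) (U, W)"
      unfolding P_def by simp
    then show ?thesis ..
  qed
  moreover have "Well_order ?R"
    using cardSuc_Card_order[OF r] card_order_on_well_order_on by blast
  ultimately obtain h where h: "\<forall>i\<in>Field ?R. P (h ` underS ?R i) (h i)"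
    using well_order_recursive_choice by metis
  have "fst ` h ` underS ?R i \<inter> nbhds_e = (fst \<circ> h) ` underS ?R i" for i
    using h Order_Relation.underS_Field[of ?R i] unfolding P_def by auto
  then have "non_generating_sequence A ?R (fst \<circ> h) (snd \<circ> h)"
    using h unfolding non_generating_sequence_def P_def by (simp add: image_comp)
  then show ?thesis
    by blast
qed

lemma non_generating_sequence_inj_on:
  assumes "total_on (Field R) R" and seq: "non_generating_sequence A R U W"
  shows "inj_on U (Field R)"
proof -
  have earlier_differ: "U j \<noteq> U i" if "i \<in> Field R" and "j \<in> underS R i" for i j
  proof
    assume "U j = U i"
    with \<open>j \<in> underS R i\<close> have "{U i} \<in> Fpow (U ` underS R i)"
      by (auto simp: Fpow_def)
    moreover have "U i \<subseteq> W i"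
    proof
      fix x assume "x \<in> U i"
      moreover have "0 \<in> U i"
        using seq \<open>i \<in> Field R\<close> by (simp add: non_generating_sequence_def nbhds_e_def)
      ultimately have "x + 0 + 0 \<in> U i + U i + U i"
        by (intro set_plus_intro)
      then show "x \<in> W i"
        using seq \<open>i \<in> Field R\<close> by (auto simp: non_generating_sequence_def)
    qed
    then have "left_entourage A (\<Inter>{U i}) \<subseteq> left_entourage A (W i)"
      by (auto simp: left_entourage_def)
    ultimately show False
      using seq \<open>i \<in> Field R\<close> unfolding non_generating_sequence_def by blast
  qed
  show ?thesis
  proof (rule inj_onI)
    fix i j assume "i \<in> Field R" and "j \<in> Field R" and "U i = U j"
    show "i = j"
    proof (rule ccontr)
      assume "i \<noteq> j"
      with assms(1) \<open>i \<in> Field R\<close> \<open>j \<in> Field R\<close> have "j \<in> underS R i \<or> i \<in> underS R j"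
        unfolding total_on_def underS_def by blast
      with earlier_differ \<open>i \<in> Field R\<close> \<open>j \<in> Field R\<close> \<open>U i = U j\<close> show False
        by metis
    qed
  qed
qed

lemma non_generating_sequence_witnesses:
  fixes A :: "'a::topological_group_add set"
  assumes seq: "non_generating_sequence A R U W" and "finite T" and "T \<subseteq> Field R"
  shows "\<exists>x y. \<forall>t\<in>T. x t \<in> A \<and> y t \<in> A \<and>
    -x t + y t \<in> \<Inter>(U ` (T \<inter> underS R t)) \<and> -x t + y t \<notin> W t"
proof -
  have "\<forall>t\<in>T. \<exists>p. p \<in> left_entourage A (\<Inter>(U ` (T \<inter> underS R t))) - left_entourage A (W t)"
  proof
    fix t assume "t \<in> T"
    have "U ` (T \<inter> underS R t) \<in> Fpow (U ` underS R t)"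
      using \<open>finite T\<close> by (auto simp: Fpow_def)
    moreover have "t \<in> Field R"
      using \<open>t \<in> T\<close> \<open>T \<subseteq> Field R\<close> by blast
    ultimately have "\<not> left_entourage A (\<Inter>(U ` (T \<inter> underS R t))) \<subseteq> left_entourage A (W t)"
      using seq unfolding non_generating_sequence_def by blast
    then show "\<exists>p. p \<in> left_entourage A (\<Inter>(U ` (T \<inter> underS R t))) - left_entourage A (W t)"
      by blast
  qed
  then obtain p where p: "\<forall>t\<in>T. p t \<in> left_entourage A (\<Inter>(U ` (T \<inter> underS R t))) - left_entourage A (W t)"
    by (rule bchoice[THEN exE])
  define x y where "x t = fst (p t)" and "y t = snd (p t)" for t
  have "\<forall>t\<in>T. x t \<in> A \<and> y t \<in> A \<and>
      -x t + y t \<in> \<Inter>(U ` (T \<inter> underS R t)) \<and> -x t + y t \<notin> W t"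
  proof
    fix t assume "t \<in> T"
    with p have "(x t, y t) \<in> left_entourage A (\<Inter>(U ` (T \<inter> underS R t))) - left_entourage A (W t)"
      by (simp add: x_def y_def)
    then show "x t \<in> A \<and> y t \<in> A \<and> -x t + y t \<in> \<Inter>(U ` (T \<inter> underS R t)) \<and> -x t + y t \<notin> W t"
      by auto
  qed
  then show ?thesis
    by blast
qed

lemma non_generating_sequence_no_common_nbhd:
  fixes A :: "'a::topological_group_add set"
  assumes "precompact A" and total: "total_on (Field R) R"
    and seq: "non_generating_sequence A R U W"
    and "I \<subseteq> Field R" and "infinite I"
  shows "\<not> (\<exists>u\<in>nbhds_e. \<forall>i\<in>I. u \<subseteq> U i)"
proof
  assume "\<exists>u\<in>nbhds_e. \<forall>i\<in>I. u \<subseteq> U i"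
  then obtain u where "u \<in> nbhds_e" and u: "\<forall>i\<in>I. u \<subseteq> U i"
    by blast
  obtain V where "V \<in> nbhds_e" and V: "\<forall>v\<in>V. \<forall>w\<in>V. -v + w \<in> u"
    using nbhds_e_left_diff_subset[OF \<open>u \<in> nbhds_e\<close>] by blast
  obtain F where "finite F" and F: "\<forall>a\<in>A. \<exists>f\<in>F. -f + a \<in> V"
    using precompact_left_net[OF \<open>precompact A\<close> \<open>V \<in> nbhds_e\<close>] by blast
  obtain T where "finite T" and "T \<subseteq> I" and card_T: "card T = Suc (card (F \<times> F))"
    using infinite_arbitrarily_large[OF \<open>infinite I\<close>] by blast
  with \<open>I \<subseteq> Field R\<close> have "T \<subseteq> Field R"
    by blast
  then obtain x y where xy: "\<forall>t\<in>T. x t \<in> A \<and> y t \<in> A \<and>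
      -x t + y t \<in> \<Inter>(U ` (T \<inter> underS R t)) \<and> -x t + y t \<notin> W t"
    using non_generating_sequence_witnesses[OF seq \<open>finite T\<close>] by blast
  have no_earlier: False
    if "s \<in> T" "t \<in> T" "s \<in> underS R t"
      and "-f + x s \<in> V" "-f + x t \<in> V" "-g + y s \<in> V" "-g + y t \<in> V" for s t f g
  proof -
    from \<open>s \<in> T\<close> \<open>T \<subseteq> I\<close> \<open>T \<subseteq> Field R\<close> have "s \<in> I" and "s \<in> Field R"
      by blast+
    then have "\<forall>v\<in>V. \<forall>w\<in>V. -v + w \<in> U s"
      using V u by blast
    moreover have "-x t + y t \<in> U s"
      using xy \<open>s \<in> T\<close> \<open>t \<in> T\<close> \<open>s \<in> underS R t\<close> by blast
    ultimately have "-x s + y s \<in> U s + U s + U s"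
      using left_diff_in_add3_if_same_cells that(4-7) by blast
    with seq xy \<open>s \<in> Field R\<close> \<open>s \<in> T\<close> show False
      unfolding non_generating_sequence_def by blast
  qed
  have "card (F \<times> F) < card T" and "\<forall>t\<in>T. x t \<in> A \<and> y t \<in> A"
    using card_T xy by simp_all
  then obtain s t f g where "s \<in> T" "t \<in> T" "s \<noteq> t"
    and cells: "-f + x s \<in> V" "-f + x t \<in> V" "-g + y s \<in> V" "-g + y t \<in> V"
    by (rule two_pairs_in_same_cells[OF \<open>finite F\<close> F \<open>finite T\<close>])
  have "s \<in> Field R" and "t \<in> Field R"
    using \<open>s \<in> T\<close> \<open>t \<in> T\<close> \<open>T \<subseteq> Field R\<close> by blast+
  with \<open>s \<noteq> t\<close> total have "s \<in> underS R t \<or> t \<in> underS R s"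
    unfolding total_on_def underS_def by blast
  then show False
  proof
    assume "s \<in> underS R t"
    from no_earlier[OF \<open>s \<in> T\<close> \<open>t \<in> T\<close> this cells] show False .
  next
    assume "t \<in> underS R s"
    from no_earlier[OF \<open>t \<in> T\<close> \<open>s \<in> T\<close> this cells(2,1,4,3)] show False .
  qed
qed

lemma calibre_excludes_non_generating_sequence:
  fixes A :: "'a::topological_group_add set" and kappa :: "'k rel"
  assumes "Card_order kappa" and "precompact A"
    and cal: "calibre (nbhds_e :: 'a set set) (\<lambda>U V. V \<subseteq> U) (cardSuc kappa) natLeq"
  shows "\<not> non_generating_sequence A (cardSuc kappa) U W"
proof
  let ?R = "cardSuc kappa"
  assume seq: "non_generating_sequence A ?R U W"
  have "Card_order ?R"
    using cardSuc_Card_order[OF assms(1)] .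
  then have "Well_order ?R"
    by (rule card_order_on_well_order_on)
  then have total: "total_on (Field ?R) ?R"
    by (simp add: well_order_on_def linear_order_on_def)
  have "( |U ` Field ?R|, ?R) \<in> ordIso"
    using card_of_inj_image_Field_ordIso[OF \<open>Card_order ?R\<close> non_generating_sequence_inj_on[OF total seq]] .
  moreover have "U ` Field ?R \<subseteq> nbhds_e"
    using seq by (auto simp: non_generating_sequence_def)
  ultimately obtain T u where "T \<subseteq> U ` Field ?R" and "( |T|, natLeq) \<in> ordIso"
    and "u \<in> nbhds_e" and u: "\<forall>t\<in>T. u \<subseteq> t"
    using cal unfolding calibre_def by meson
  define I where "I = {i \<in> Field ?R. U i \<in> T}"
  have "T \<subseteq> U ` I"
    using \<open>T \<subseteq> U ` Field ?R\<close> unfolding I_def by blast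
  then have "infinite I"
    using infinite_if_ordIso_natLeq[OF \<open>( |T|, natLeq) \<in> ordIso\<close>] by (meson finite_imageI finite_subset)
  moreover have "I \<subseteq> Field ?R" and "\<forall>i\<in>I. u \<subseteq> U i"
    using u unfolding I_def by auto
  ultimately show False
    using non_generating_sequence_no_common_nbhd[OF assms(2) total seq] \<open>u \<in> nbhds_e\<close> by blast
qed

theorem mainTheorem10:
  fixes A :: "'a::topological_group_add set"
    and kappa :: "'k rel"
  assumes "Card_order kappa" and "infinite (Field kappa)"
    and "precompact A"
    and "calibre (nbhds_e :: 'a set set) (\<lambda>U V. V \<subseteq> U) (cardSuc kappa) natLeq"
  shows "weight_le (subtopology euclidean A) kappa"
proof (rule ccontr)
  assume "\<not> weight_le (subtopology euclidean A) kappa"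
  then have "\<And>\<V>. \<V> \<subseteq> nbhds_e \<Longrightarrow> |\<V>| \<le>o kappa \<Longrightarrow> \<not> generates_uniformity_on A \<V>"
    using weight_le_if_generates_uniformity_on[OF assms(1-3)] by blast
  then obtain U W where "non_generating_sequence A (cardSuc kappa) U W"
    using exists_non_generating_sequence[OF assms(1)] by blast
  with calibre_excludes_non_generating_sequence[OF assms(1,3,4)] show False
    by blast
qed

end
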